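(* For every $d\in\mathbb{N}$ and every $2\le i\le d$, $$\mu_i(T_d)\leqslant\frac12+\sum_{j=0}^{i-2}\frac{d-j}{d-j+1}.$$
   Context: $T_d=\operatorname{conv}(-\mathbb{1}_d,e_1,\dots,e_d)\subseteq\mathbb{R}^d$ is the standard terminal simplex. For a convex body $K\subseteq\mathbb{R}^d$ and $i\in\{1,\dots,d\}$, $\mu_i(K)=\min\{\mu\ge0:(\mu K+\mathbb{Z}^d)\cap U\ne\emptyset$ for every $(d-i)$-dimensional affine subspace $U\subseteq\mathbb{R}^d\}$. *)

theory Defs
  imports "HOL-Analysis.Analysis"
begin

definition int_lattice :: "(real ^ 'n) set" where
  "int_lattice = {z. \<forall>k. z $ k \<in> \<int>}"

definition terminal_simplex :: "(real ^ 'n) set" where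
  "terminal_simplex = convex hull (insert (- (\<chi> k. 1)) (range (\<lambda>k. axis k 1)))"

text \<open>The \<open>i\<close>-th covering minimum: the minimum \<open>\<mu> \<ge> 0\<close> such that \<open>\<mu>K + \<int>^d\<close> meets every
  \<open>(d-i)\<close>-dimensional affine subspace; rendered as the infimum of that set (which is attained).\<close>
definition covering_minimum :: "nat \<Rightarrow> (real ^ 'n) set \<Rightarrow> real" where
  "covering_minimum i K = Inf {\<mu>. \<mu> \<ge> 0 \<and>
      (\<forall>U. affine U \<and> aff_dim U = int (CARD('n) - i) \<longrightarrow>
         {\<mu> *\<^sub>R x + z | x z. x \<in> K \<and> z \<in> int_lattice} \<inter> U \<noteq> {})}"

end

theory Submission
  imports Defs
begin

text \<open>Let \<open>U\<close> be a \<open>(d-i)\<close>-flat through \<open>u\<^sub>0\<close>. Adding \<open>i-1\<close> suitable coordinate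
  directions \<open>e\<^sub>k\<close>, \<open>k \<in> K\<close>, to the direction of \<open>U\<close> yields a linear hyperplane \<open>H\<close>.
  Since \<open>T\<^sub>d\<close> has lattice vertices strictly on both sides of every linear hyperplane, the
  lattice translates of \<open>T\<^sub>d/2\<close> meet \<open>u\<^sub>0 + H\<close>, say in \<open>x\<close>; and \<open>x\<close> differs from a point
  of \<open>U\<close> by a vector of the coordinate subspace \<open>\<real>\<^sup>K\<close>. The latter is covered by the lattice
  translates of \<open>\<lambda>\<^sub>j T\<^sub>d\<close>, \<open>j = |K|\<close>, where \<open>\<lambda>\<^sub>j = \<Sum>l<j. (d-l)/(d-l+1)\<close>: adjoining a
  coordinate \<open>c\<close> to \<open>K\<close> costs \<open>m/(m+1)\<close> with \<open>m = d - |K|\<close>, because \<open>T\<^sub>d\<close> contains the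
  segment from \<open>e\<^sub>c\<close> to \<open>-1/m\<close> times the indicator vector of \<open>K \<union> {c}\<close>, along which the
  \<open>c\<close>-th coordinate sweeps an interval of length \<open>1 + 1/m\<close>. Finally, convexity of \<open>T\<^sub>d\<close>
  makes the radii add: \<open>\<alpha>T\<^sub>d + \<beta>T\<^sub>d = (\<alpha>+\<beta>)T\<^sub>d\<close>.\<close>

definition lattice_translates :: "real \<Rightarrow> (real ^ 'n) set \<Rightarrow> (real ^ 'n) set" where
  "lattice_translates \<mu> K = {\<mu> *\<^sub>R x + z | x z. x \<in> K \<and> z \<in> int_lattice}"

definition coordinate_subspace :: "'n set \<Rightarrow> (real ^ 'n) set" where
  "coordinate_subspace K = {v. \<forall>k. k \<notin> K \<longrightarrow> v $ k = 0}"

definition coordinate_covering_radius :: "nat \<Rightarrow> nat \<Rightarrow> real" where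
  "coordinate_covering_radius d j = (\<Sum>l<j. (real d - real l) / (real d - real l + 1))"

lemma zero_in_int_lattice: "0 \<in> int_lattice"
  unfolding int_lattice_def by simp

lemma int_lattice_add: "x \<in> int_lattice \<Longrightarrow> y \<in> int_lattice \<Longrightarrow> x + y \<in> int_lattice"
  unfolding int_lattice_def by auto

lemma int_lattice_uminus: "x \<in> int_lattice \<Longrightarrow> - x \<in> int_lattice"
  unfolding int_lattice_def by auto

lemma int_lattice_scaleR_of_int: "x \<in> int_lattice \<Longrightarrow> of_int n *\<^sub>R x \<in> int_lattice"
  unfolding int_lattice_def by auto

lemma axis_in_int_lattice: "axis k 1 \<in> int_lattice"
  unfolding int_lattice_def by (auto simp: axis_def)

lemma lattice_translates_add:
  assumes "convex K" "0 \<le> \<alpha>" "0 \<le> \<beta>"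
    and "x \<in> lattice_translates \<alpha> K" "y \<in> lattice_translates \<beta> K"
  shows "x + y \<in> lattice_translates (\<alpha> + \<beta>) K"
proof -
  obtain p z where p: "p \<in> K" "z \<in> int_lattice" "x = \<alpha> *\<^sub>R p + z"
    using assms(4) unfolding lattice_translates_def by blast
  obtain q z' where q: "q \<in> K" "z' \<in> int_lattice" "y = \<beta> *\<^sub>R q + z'"
    using assms(5) unfolding lattice_translates_def by blast
  obtain t where t: "t \<in> K" "\<alpha> *\<^sub>R p + \<beta> *\<^sub>R q = (\<alpha> + \<beta>) *\<^sub>R t"
  proof (cases "\<alpha> + \<beta> = 0")
    case True
    then have "\<alpha> = 0" "\<beta> = 0" using assms(2,3) by linarith+
    then show ?thesis using that[OF p(1)] by simp
  next
    case False
    let ?t = "(\<alpha> / (\<alpha> + \<beta>)) *\<^sub>R p + (\<beta> / (\<alpha> + \<beta>)) *\<^sub>R q"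
    have "?t \<in> K"
      using assms(1-3) p(1) q(1) False by (intro convexD) (auto simp: add_divide_distrib[symmetric])
    moreover have "\<alpha> *\<^sub>R p + \<beta> *\<^sub>R q = (\<alpha> + \<beta>) *\<^sub>R ?t"
      using False by (simp add: scaleR_add_right)
    ultimately show ?thesis by (rule that)
  qed
  have "x + y = (\<alpha> + \<beta>) *\<^sub>R t + (z + z')"
    using p(3) q(3) t(2) by (simp add: algebra_simps)
  then show ?thesis
    unfolding lattice_translates_def using t(1) int_lattice_add[OF p(2) q(2)] by blast
qed

lemma covering_minimum_le:
  fixes K :: "(real ^ 'n::finite) set"
  assumes "0 \<le> \<mu>"
    and "\<And>U. affine U \<Longrightarrow> aff_dim U = int (CARD('n) - i) \<Longrightarrow> lattice_translates \<mu> K \<inter> U \<noteq> {}"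
  shows "covering_minimum i K \<le> \<mu>"
  unfolding covering_minimum_def
  using assms by (intro cInf_lower bdd_belowI[of _ 0]) (auto simp: lattice_translates_def)

lemma hyperplane_meets_lattice_translates:
  assumes "convex K" "p \<in> K" "q \<in> K" "z \<in> int_lattice"
    and "0 < a \<bullet> z" "a \<bullet> z \<le> \<mu> * (a \<bullet> q - a \<bullet> p)"
  shows "\<exists>x \<in> lattice_translates \<mu> K. a \<bullet> x = b"
proof -
  define c where "c = a \<bullet> z"
  define lo where "lo = \<mu> * (a \<bullet> p)"
  define L where "L = \<mu> * (a \<bullet> q - a \<bullet> p)"
  define n where "n = \<lfloor>(b - lo) / c\<rfloor>"
  have c: "0 < c" "c \<le> L"
    using assms(5,6) unfolding c_def L_def by auto
  have "n \<le> (b - lo) / c" "(b - lo) / c < n + 1"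
    unfolding n_def by linarith+
  then have n: "lo \<le> b - n * c" "b - n * c < lo + c"
    using c(1) by (simp_all add: field_simps)
  define t where "t = (b - n * c - lo) / L"
  have t: "0 \<le> t" "t \<le> 1"
    using n c unfolding t_def by (simp_all add: field_simps)
  have "(1 - t) *\<^sub>R p + t *\<^sub>R q \<in> K"
    using assms(1-3) t by (intro convexD) auto
  moreover have "a \<bullet> (\<mu> *\<^sub>R ((1 - t) *\<^sub>R p + t *\<^sub>R q) + of_int n *\<^sub>R z) = lo + t * L + n * c"
    unfolding lo_def L_def c_def by (simp add: inner_add_right algebra_simps)
  moreover have "lo + t * L + n * c = b"
    using c unfolding t_def by simp
  ultimately show ?thesis
    unfolding lattice_translates_def using int_lattice_scaleR_of_int[OF assms(4)] by fastforce
qed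

lemma convex_terminal_simplex: "convex terminal_simplex"
  unfolding terminal_simplex_def by simp

lemma axis_in_terminal_simplex: "axis k 1 \<in> terminal_simplex"
  unfolding terminal_simplex_def by (auto intro: hull_inc)

lemma minus_one_in_terminal_simplex: "- (\<chi> k. 1) \<in> terminal_simplex"
  unfolding terminal_simplex_def by (auto intro: hull_inc)

lemma terminal_simplex_barycentric:
  fixes w :: "'n::finite \<Rightarrow> real"
  assumes "0 \<le> w0" "\<And>k. 0 \<le> w k" "w0 + sum w UNIV = 1"
  shows "(\<chi> k. w k - w0) \<in> (terminal_simplex :: (real ^ 'n) set)"
proof -
  let ?a = "\<lambda>j::'n option. case j of None \<Rightarrow> w0 | Some k \<Rightarrow> w k"
  let ?v = "\<lambda>j::'n option. case j of None \<Rightarrow> - (\<chi> k. 1) | Some k \<Rightarrow> axis k (1::real)"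
  have UNIV_option: "(UNIV :: 'n option set) = insert None (Some ` UNIV)"
    by (rule UNIV_option_conv)
  have "(\<Sum>j\<in>UNIV. ?a j *\<^sub>R ?v j) \<in> terminal_simplex"
  proof (rule convex_sum)
    show "sum ?a UNIV = 1"
      unfolding UNIV_option using assms(3) by (simp add: sum.reindex)
    show "0 \<le> ?a j" for j
      using assms by (cases j) auto
    show "?v j \<in> terminal_simplex" for j
      using axis_in_terminal_simplex minus_one_in_terminal_simplex by (cases j) auto
  qed (simp_all add: convex_terminal_simplex)
  moreover have "(\<Sum>j\<in>UNIV. ?a j *\<^sub>R ?v j) = (\<chi> k. w k - w0)"
    unfolding UNIV_option
    by (simp add: sum.reindex vec_eq_iff axis_def if_distrib sum.delta cong: if_cong)
  ultimately show ?thesis by simp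
qed

lemma scaled_indicator_in_terminal_simplex:
  fixes S :: "'n::finite set"
  defines "m \<equiv> real CARD('n) + 1 - real (card S)"
  shows "(\<chi> k. if k \<in> S then - 1 / m else 0) \<in> terminal_simplex"
proof -
  have card_S: "card S \<le> CARD('n)"
    by (rule card_mono) auto
  then have "0 < m"
    unfolding m_def by linarith
  have "(\<Sum>k\<in>UNIV. if k \<in> S then 0 else 1 / m) = real (card (- S)) / m"
    by (simp add: sum.If_cases Compl_eq)
  also have "\<dots> = (m - 1) / m"
    using card_S by (simp add: Compl_eq_Diff_UNIV card_Diff_subset of_nat_diff m_def)
  finally have "(\<chi> k. (if k \<in> S then 0 else 1 / m) - 1 / m) \<in> (terminal_simplex :: (real ^ 'n) set)"
    using \<open>0 < m\<close> by (intro terminal_simplex_barycentric) (simp_all add: diff_divide_distrib)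
  moreover have "(\<chi> k. (if k \<in> S then 0 else 1 / m) - 1 / m) = (\<chi> k. if k \<in> S then - 1 / m else 0)"
    by (simp add: vec_eq_iff)
  ultimately show ?thesis
    by simp
qed

lemma zero_in_terminal_simplex: "0 \<in> terminal_simplex"
  using scaled_indicator_in_terminal_simplex[of "{}"] by (simp add: zero_vec_def)

lemma terminal_simplex_scaleR:
  assumes "x \<in> terminal_simplex" "0 \<le> t" "t \<le> 1"
  shows "t *\<^sub>R x \<in> terminal_simplex"
  using convexD[OF convex_terminal_simplex zero_in_terminal_simplex assms(1), of "1 - t" t] assms(2,3)
  by simp

lemma terminal_simplex_lattice_point_on_positive_side:
  fixes a :: "real ^ 'n::finite"
  assumes "a \<noteq> 0"
  obtains v where "v \<in> terminal_simplex" "v \<in> int_lattice" "0 < a \<bullet> v"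
proof (cases "\<exists>k. 0 < a $ k")
  case True
  then obtain k where "0 < a $ k" by blast
  then show ?thesis
    using that[OF axis_in_terminal_simplex axis_in_int_lattice] by (simp add: cart_eq_inner_axis)
next
  case False
  then have nonpos: "a $ k \<le> 0" for k
    by (simp add: not_less)
  obtain k where "a $ k \<noteq> 0"
    using assms by (auto simp: vec_eq_iff)
  with nonpos have "0 < (\<Sum>k\<in>UNIV. - a $ k)"
    by (intro sum_pos2[of _ k]) (auto simp: order_less_le)
  moreover have "- (\<chi> k. 1) \<in> int_lattice"
    unfolding int_lattice_def by simp
  ultimately show ?thesis
    using that[OF minus_one_in_terminal_simplex] by (simp add: inner_vec_def sum_negf)
qed

lemma hyperplane_meets_half_terminal_simplex_translates:
  fixes a :: "real ^ 'n::finite"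
  assumes "a \<noteq> 0"
  shows "\<exists>x \<in> lattice_translates (1/2) terminal_simplex. a \<bullet> x = b"
proof -
  obtain p where p: "p \<in> terminal_simplex" "p \<in> int_lattice" "0 < a \<bullet> p"
    using terminal_simplex_lattice_point_on_positive_side[OF assms] .
  obtain q where q: "q \<in> terminal_simplex" "q \<in> int_lattice" "a \<bullet> q < 0"
    using terminal_simplex_lattice_point_on_positive_side[of "- a"] assms by auto
  show ?thesis
  proof (cases "a \<bullet> p \<le> - (a \<bullet> q)")
    case True
    with p q show ?thesis
      by (intro hyperplane_meets_lattice_translates[OF convex_terminal_simplex q(1) p(1) p(2)]) auto
  next
    case False
    with p q show ?thesis
      by (intro hyperplane_meets_lattice_translates[OF convex_terminal_simplex q(1) p(1)
            int_lattice_uminus[OF q(2)]]) auto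
  qed
qed

lemma terminal_simplex_coordinate_section:
  fixes K :: "'n::finite set"
  assumes "c \<notin> K" "- 1 / real (CARD('n) - card K) \<le> \<sigma>" "\<sigma> \<le> 1"
  obtains y where "y \<in> terminal_simplex" "y \<in> coordinate_subspace (insert c K)" "y $ c = \<sigma>"
proof (cases "0 \<le> \<sigma>")
  case True
  have "\<sigma> *\<^sub>R axis c 1 \<in> terminal_simplex"
    using True assms(3) by (intro terminal_simplex_scaleR axis_in_terminal_simplex)
  then show ?thesis
    by (rule that) (auto simp: coordinate_subspace_def axis_def)
next
  case False
  define m where "m = real (CARD('n) - card K)"
  have "card K < CARD('n)"
    using assms(1) by (intro psubset_card_mono) auto
  then have "0 < m" and m_eq: "m = real CARD('n) + 1 - real (card (insert c K))"
    using assms(1) unfolding m_def by auto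
  have "- 1 \<le> m * \<sigma>"
    using assms(2) \<open>0 < m\<close> unfolding m_def[symmetric] by (simp add: field_simps)
  moreover have "0 \<le> - m * \<sigma>"
    using False \<open>0 < m\<close> by (simp add: mult_nonneg_nonpos)
  moreover have "(\<chi> k. if k \<in> insert c K then - 1 / m else 0) \<in> terminal_simplex"
    using scaled_indicator_in_terminal_simplex[of "insert c K"] unfolding m_eq .
  ultimately have "(- m * \<sigma>) *\<^sub>R (\<chi> k. if k \<in> insert c K then - 1 / m else 0) \<in> terminal_simplex"
    by (intro terminal_simplex_scaleR) simp_all
  moreover have "(- m * \<sigma>) *\<^sub>R (\<chi> k. if k \<in> insert c K then - 1 / m else 0)
      = (\<chi> k. if k \<in> insert c K then \<sigma> else 0)"
    using \<open>0 < m\<close> by (simp add: vec_eq_iff)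
  ultimately show ?thesis
    by (intro that) (auto simp: coordinate_subspace_def)
qed

lemma coordinate_covering_radius_Suc:
  "coordinate_covering_radius d (Suc j)
     = coordinate_covering_radius d j + (real d - real j) / (real d - real j + 1)"
  unfolding coordinate_covering_radius_def by simp

lemma coordinate_covering_radius_nonneg: "j \<le> d \<Longrightarrow> 0 \<le> coordinate_covering_radius d j"
  unfolding coordinate_covering_radius_def by (intro sum_nonneg) auto

lemma coordinate_subspace_subset_lattice_translates:
  fixes K :: "'n::finite set"
  shows "coordinate_subspace K
           \<subseteq> lattice_translates (coordinate_covering_radius CARD('n) (card K)) terminal_simplex"
  using finite[of K]
proof (induction K rule: finite_induct)
  case empty
  have "coordinate_subspace {} = {0 :: real ^ 'n}"
    by (auto simp: coordinate_subspace_def vec_eq_iff)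
  moreover have "0 *\<^sub>R 0 + 0 \<in> lattice_translates 0 (terminal_simplex :: (real ^ 'n) set)"
    unfolding lattice_translates_def using zero_in_terminal_simplex zero_in_int_lattice by blast
  ultimately show ?case
    by (simp add: coordinate_covering_radius_def)
next
  case (insert c K)
  define m where "m = real (CARD('n) - card K)"
  define \<kappa> where "\<kappa> = m / (m + 1)"
  have "card K < CARD('n)"
    using insert(2) by (intro psubset_card_mono) auto
  then have "1 \<le> m" and radius: "coordinate_covering_radius CARD('n) (card (insert c K))
      = coordinate_covering_radius CARD('n) (card K) + \<kappa>"
    using insert(1,2) by (auto simp: m_def \<kappa>_def coordinate_covering_radius_Suc of_nat_diff)
  have "0 < \<kappa>"
    using \<open>1 \<le> m\<close> unfolding \<kappa>_def by simp
  show ?case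
  proof
    fix r :: "real ^ 'n"
    assume r: "r \<in> coordinate_subspace (insert c K)"
    define n where "n = \<lfloor>r $ c + 1 / (m + 1)\<rfloor>"
    define \<sigma> where "\<sigma> = (r $ c - n) / \<kappa>"
    have "r $ c + 1 / (m + 1) - 1 < n" "n \<le> r $ c + 1 / (m + 1)"
      unfolding n_def by linarith+
    moreover have "1 / (m + 1) = \<kappa> / m" "1 - 1 / (m + 1) = \<kappa>"
      using \<open>1 \<le> m\<close> unfolding \<kappa>_def by (simp_all add: field_simps add_nonneg_eq_0_iff)
    ultimately have "- \<kappa> / m \<le> r $ c - n" "r $ c - n \<le> \<kappa>"
      by linarith+
    then have "- 1 / m \<le> \<sigma>" "\<sigma> \<le> 1"
      using \<open>0 < \<kappa>\<close> \<open>1 \<le> m\<close> unfolding \<sigma>_def by (simp_all add: field_simps)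
    then obtain y where
      y: "y \<in> terminal_simplex" "y \<in> coordinate_subspace (insert c K)" "y $ c = \<sigma>"
      using terminal_simplex_coordinate_section[OF insert(2)] unfolding m_def by blast
    define step where "step = \<kappa> *\<^sub>R y + of_int n *\<^sub>R axis c 1"
    have "step \<in> lattice_translates \<kappa> terminal_simplex"
      unfolding step_def lattice_translates_def
      using y(1) int_lattice_scaleR_of_int[OF axis_in_int_lattice] by blast
    moreover have "r - step \<in> coordinate_subspace K"
      using r y(2,3) \<open>0 < \<kappa>\<close> unfolding coordinate_subspace_def step_def \<sigma>_def
      by (auto simp: axis_def)
    then have "r - step
        \<in> lattice_translates (coordinate_covering_radius CARD('n) (card K)) terminal_simplex"
      using insert(3) by blast
    ultimately have "(r - step) + step
        \<in> lattice_translates (coordinate_covering_radius CARD('n) (card K) + \<kappa>) terminal_simplex"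
      using \<open>0 < \<kappa>\<close> \<open>card K < CARD('n)\<close>
      by (intro lattice_translates_add convex_terminal_simplex coordinate_covering_radius_nonneg) auto
    then show "r \<in> lattice_translates
        (coordinate_covering_radius CARD('n) (card (insert c K))) terminal_simplex"
      by (simp add: radius)
  qed
qed

lemma subspace_coordinate_subspace: "subspace (coordinate_subspace K)"
  unfolding subspace_def coordinate_subspace_def by auto

lemma subspace_extend_by_coordinates_to_hyperplane:
  fixes D :: "(real ^ 'n::finite) set"
  assumes "subspace D" "dim D + j + 1 = CARD('n)"
  obtains K a where "card K = j" "a \<noteq> 0"
    "\<And>h. a \<bullet> h = 0 \<Longrightarrow> \<exists>\<delta>\<in>D. \<exists>v\<in>coordinate_subspace K. h = \<delta> + v"
proof -
  obtain BD where BD: "BD \<subseteq> D" "independent BD" "D \<subseteq> span BD" "card BD = dim D"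
    by (rule basis_exists)
  have span_BD: "span BD = D"
    using BD assms(1) by (simp add: span_subspace)
  obtain B where B: "BD \<subseteq> B" "B \<subseteq> BD \<union> Basis" "independent B" "BD \<union> Basis \<subseteq> span B"
    using maximal_independent_subset_extend[of BD "BD \<union> Basis"] BD(2) by blast
  have "finite B"
    using independent_bound[OF B(3)] by simp
  have "span B = UNIV"
    using B(4) by (metis span_Basis span_mono span_span le_sup_iff top.extremum_uniqueI)
  then have "card B = CARD('n)"
    using dim_eq_card_independent[OF B(3)] dim_span[of B] by simp
  then have "card (B - BD) = j + 1"
    using card_Diff_subset[OF finite_subset[OF B(1) \<open>finite B\<close>] B(1)] BD(4) assms(2) by simp
  then obtain E where E: "E \<subseteq> B - BD" "card E = j"
    using obtain_subset_with_card_n[of j "B - BD"] by auto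
  define K where "K = {k. axis k (1::real) \<in> E}"
  have "E \<subseteq> Basis"
    using E(1) B(2) by auto
  then have E_axes: "E = (\<lambda>k. axis k 1) ` K"
    unfolding K_def Basis_vec_def by auto
  have "card K = j"
    using E(2) card_image[of "\<lambda>k. axis k (1::real)" K] by (simp add: E_axes inj_on_def axis_eq_axis)
  have "independent (BD \<union> E)"
    using B(1,3) E(1) independent_mono by blast
  moreover have "finite BD" "finite E" "BD \<inter> E = {}"
    using B(1) E(1) \<open>finite B\<close> by (auto intro: finite_subset)
  then have "card (BD \<union> E) = CARD('n) - 1"
    using card_Un_disjoint[of BD E] E(2) BD(4) assms(2) by simp
  ultimately have dim_span: "dim (span (BD \<union> E)) = CARD('n) - 1"
    by (metis dim_eq_card_independent dim_span)
  then obtain a :: "real ^ 'n" where a: "a \<noteq> 0" "span (BD \<union> E) \<subseteq> {x. a \<bullet> x = 0}"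
    using lowdim_subset_hyperplane[of "BD \<union> E"] assms(2) by auto
  have hyperplane: "{x. a \<bullet> x = 0} = span (BD \<union> E)"
    using a dim_span dim_hyperplane[OF a(1)] subspace_hyperplane
    by (intro subspace_dim_equal[symmetric]) auto
  have "span E \<subseteq> coordinate_subspace K"
    using subspace_coordinate_subspace
    by (intro span_minimal) (auto simp: E_axes coordinate_subspace_def axis_def)
  moreover have "h \<in> span (BD \<union> E)" if "a \<bullet> h = 0" for h
    using that hyperplane by blast
  ultimately have "\<exists>\<delta>\<in>D. \<exists>v\<in>coordinate_subspace K. h = \<delta> + v" if "a \<bullet> h = 0" for h
    using that span_BD unfolding span_Un by blast
  with \<open>card K = j\<close> a(1) show ?thesis
    using that by blast
qed

lemma affine_meets_terminal_simplex_translates: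
  fixes U :: "(real ^ 'n::finite) set"
  assumes "1 \<le> i" "i \<le> CARD('n)" "affine U" "aff_dim U = int (CARD('n) - i)"
  shows "lattice_translates (1/2 + coordinate_covering_radius CARD('n) (i - 1)) terminal_simplex
           \<inter> U \<noteq> {}"
proof -
  obtain u0 where u0: "u0 \<in> U"
    using assms(4) by fastforce
  define D where "D = (+) (- u0) ` U"
  have "subspace D"
    unfolding D_def by (rule affine_diffs_subspace[OF assms(3) u0])
  have "aff_dim U = int (dim D)"
    unfolding D_def by (rule aff_dim_eq_dim) (simp add: hull_inc u0)
  then have "dim D + (i - 1) + 1 = CARD('n)"
    using assms(1,2,4) by simp
  then obtain K a where K: "card K = i - 1" and "a \<noteq> 0"
    and decompose: "\<And>h. a \<bullet> h = 0 \<Longrightarrow> \<exists>\<delta>\<in>D. \<exists>v\<in>coordinate_subspace K. h = \<delta> + v"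
    using subspace_extend_by_coordinates_to_hyperplane[OF \<open>subspace D\<close>] by blast
  obtain x where x: "x \<in> lattice_translates (1/2) terminal_simplex" "a \<bullet> x = a \<bullet> u0"
    using hyperplane_meets_half_terminal_simplex_translates[OF \<open>a \<noteq> 0\<close>] by blast
  then obtain \<delta> v where "\<delta> \<in> D" "v \<in> coordinate_subspace K" "x - u0 = \<delta> + v"
    using decompose[of "x - u0"] by (auto simp: inner_diff_right)
  have "u0 + \<delta> \<in> U"
    using \<open>\<delta> \<in> D\<close> unfolding D_def by auto
  have "- v \<in> coordinate_subspace K"
    using \<open>v \<in> coordinate_subspace K\<close> subspace_coordinate_subspace subspace_neg by blast
  then have "- v
      \<in> lattice_translates (coordinate_covering_radius CARD('n) (i - 1)) terminal_simplex"
    using coordinate_subspace_subset_lattice_translates[of K] K by auto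
  with x(1) have "x + - v
      \<in> lattice_translates (1/2 + coordinate_covering_radius CARD('n) (i - 1)) terminal_simplex"
    using assms(2)
    by (intro lattice_translates_add convex_terminal_simplex coordinate_covering_radius_nonneg) auto
  moreover have "x + - v = u0 + \<delta>"
    using \<open>x - u0 = \<delta> + v\<close> by (simp add: algebra_simps)
  ultimately show ?thesis
    using \<open>u0 + \<delta> \<in> U\<close> by auto
qed

theorem corollary5p6:
  fixes i :: nat
  assumes "2 \<le> i" and "i \<le> CARD('n::finite)"
  shows "covering_minimum i (terminal_simplex :: (real ^ 'n) set)
           \<le> 1/2 + (\<Sum>j = 0..i-2. (real CARD('n) - real j) / (real CARD('n) - real j + 1))"
proof -
  have "{0..i-2} = {..<i-1}"
    using assms(1) by auto
  then have "(\<Sum>j = 0..i-2. (real CARD('n) - real j) / (real CARD('n) - real j + 1))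
      = coordinate_covering_radius CARD('n) (i - 1)"
    by (simp add: coordinate_covering_radius_def)
  moreover have "covering_minimum i (terminal_simplex :: (real ^ 'n) set)
      \<le> 1/2 + coordinate_covering_radius CARD('n) (i - 1)"
  proof (rule covering_minimum_le)
    show "0 \<le> 1/2 + coordinate_covering_radius CARD('n) (i - 1)"
      using assms(2) coordinate_covering_radius_nonneg[of "i - 1" "CARD('n)"] by simp
  qed (rule affine_meets_terminal_simplex_translates, use assms in auto)
  ultimately show ?thesis
    by simp
qed

end
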